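(* The $G$-invariant functions $p_1,\dots,p_5$ on $\mathscr X_2$ given by $p_1(v,w,C)=\langle v,v\rangle$, $p_2(v,w,C)=\langle w,w\rangle$, $p_3(v,w,C)=\langle Cv,w\rangle$, $p_4(v,w,C)=\operatorname{tr}(C^tC)$, $p_5(v,w,C)=\det C$ separate orbits in general position.
   Context: Identify $V_1=V_2=\mathbb C^2$ with Pauli matrices $\sigma_1=\begin{pmatrix}0&1\\1&0\end{pmatrix}$, $\sigma_2=\begin{pmatrix}0&-i\\i&0\end{pmatrix}$, $\sigma_3=\begin{pmatrix}1&0\\0&-1\end{pmatrix}$. Trace-one endomorphisms of $\mathbb C^2\otimes\mathbb C^2$ are written uniquely as $\tfrac14\big(I\otimes I+\sum_a v_a\sigma_a\otimes I+\sum_b w_bI\otimes\sigma_b+\sum_{a,b}C_{ba}\sigma_a\otimes\sigma_b\big)$, giving coordinates $(v,w,C)\in\mathbb C^3\times\mathbb C^3\times M_3(\mathbb C)$ on the space $\mathscr L_2$; $G=\mathrm{SO}_3(\mathbb C)^2$ acts by $(g_1,g_2)\cdot(v,w,C)=(g_1v,g_2w,g_2Cg_1^{-1})$. $\langle x,y\rangle=\sum_a x_ay_a$ on $\mathbb C^3$. Let $X_0$ be the subspace with $v_1=v_2=w_1=w_2=0$ and $C_{ba}=0$ whenever exactly one of $a,b$ equals $3$; $\mathscr X_2$ is the Zariski closure of $G\cdot X_0$ (equivalently of the set of two-qubit X-states), with reduced structure. A collection $f_1,\dots,f_m$ of $G$-invariant rational functions on a $G$-variety $X$ separates orbits in general position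 if there is a dense Zariski-open $U\subseteq X$ such that any $x_1,x_2\in U$ with $f_i(x_1)=f_i(x_2)$ for all $i$ lie in the same $G$-orbit. *)

theory Defs
  imports "HOL-Analysis.Analysis"
begin

text \<open>Points of L_2: triples (v, w, C) with v, w in C^3 and C a 3x3 complex matrix;
  C $ b $ a is the entry C_{ba} (row b, column a).\<close>
type_synonym pt = "(complex^3) \<times> (complex^3) \<times> (complex^3^3)"

inductive_set poly_fun :: "(pt \<Rightarrow> complex) set" where
  const: "(\<lambda>x. c) \<in> poly_fun"
| coord_v: "(\<lambda>(v, w, C). v $ i) \<in> poly_fun"
| coord_w: "(\<lambda>(v, w, C). w $ i) \<in> poly_fun"
| coord_C: "(\<lambda>(v, w, C). C $ i $ j) \<in> poly_fun"
| add: "f \<in> poly_fun \<Longrightarrow> g \<in> poly_fun \<Longrightarrow> (\<lambda>x. f x + g x) \<in> poly_fun"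
| mult: "f \<in> poly_fun \<Longrightarrow> g \<in> poly_fun \<Longrightarrow> (\<lambda>x. f x * g x) \<in> poly_fun"

definition zariski_closed :: "pt set \<Rightarrow> bool" where
  "zariski_closed S \<longleftrightarrow> (\<exists>F \<subseteq> poly_fun. S = {x. \<forall>f\<in>F. f x = 0})"

definition zariski_closure :: "pt set \<Rightarrow> pt set" where
  "zariski_closure A = \<Inter>{S. zariski_closed S \<and> A \<subseteq> S}"

definition SO3 :: "(complex^3^3) set" where
  "SO3 = {g. transpose g ** g = mat 1 \<and> det g = 1}"

definition act :: "(complex^3^3) \<times> (complex^3^3) \<Rightarrow> pt \<Rightarrow> pt" where
  "act gg x = (case gg of (g1, g2) \<Rightarrow> (case x of (v, w, C) \<Rightarrow>
      (g1 *v v, g2 *v w, g2 ** C ** matrix_inv g1)))"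

definition Gset :: "((complex^3^3) \<times> (complex^3^3)) set" where
  "Gset = SO3 \<times> SO3"

definition X0 :: "pt set" where
  "X0 = {(v, w, C). v $ 1 = 0 \<and> v $ 2 = 0 \<and> w $ 1 = 0 \<and> w $ 2 = 0 \<and>
     (\<forall>a b. (a = 3) \<noteq> (b = 3) \<longrightarrow> C $ b $ a = 0)}"

definition X2 :: "pt set" where
  "X2 = zariski_closure {act g x | g x. g \<in> Gset \<and> x \<in> X0}"

definition bil :: "complex^3 \<Rightarrow> complex^3 \<Rightarrow> complex" where
  "bil x y = (\<Sum>a\<in>UNIV. x $ a * y $ a)"

definition mtrace :: "complex^3^3 \<Rightarrow> complex" where
  "mtrace M = (\<Sum>i\<in>UNIV. M $ i $ i)"

definition p1 :: "pt \<Rightarrow> complex" where "p1 x = (case x of (v, w, C) \<Rightarrow> bil v v)"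
definition p2 :: "pt \<Rightarrow> complex" where "p2 x = (case x of (v, w, C) \<Rightarrow> bil w w)"
definition p3 :: "pt \<Rightarrow> complex" where "p3 x = (case x of (v, w, C) \<Rightarrow> bil (C *v v) w)"
definition p4 :: "pt \<Rightarrow> complex" where "p4 x = (case x of (v, w, C) \<Rightarrow> mtrace (transpose C ** C))"
definition p5 :: "pt \<Rightarrow> complex" where "p5 x = (case x of (v, w, C) \<Rightarrow> det C)"

definition pinv :: "pt \<Rightarrow> complex list" where
  "pinv x = [p1 x, p2 x, p3 x, p4 x, p5 x]"

end

theory Submission
  imports Defs
begin

(* G X0 lies in the closed set Y2 cut out by the invariant equations
   <w,w> Cv = <Cv,w> w and <v,v> C\<^sup>T w = <Cv,w> v. A point of Y2 with <v,v> and <w,w>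
   nonzero is moved into X0 by rotating v and w onto the third axis, since the equations then
   force C to be block diagonal. On X0 the invariants determine v, w and e up to sign, together
   with the sum of squares and the determinant of the 2 x 2 block. In coordinates z1, ..., z4
   diagonalising the action of SO(2) x SO(2) on the block, these two quantities amount to the
   products z1 z2 and z3 z4, and when all z_i are nonzero two blocks with equal products are
   related by such rotations. All non-degeneracy conditions amount to the non-vanishing of one
   invariant polynomial hgen. Every point of X0 is a limit of points of X0 where hgen does not
   vanish; since Zariski closed sets are closed and hgen is invariant, the part of X2 where hgen
   does not vanish is therefore Zariski dense in X2. *)

section \<open>Rotations and the bilinear form\<close>

lemma SO3_transpose_mult_self: "g \<in> SO3 \<Longrightarrow> transpose g ** g = mat 1"
  by (simp add: SO3_def)

lemma SO3_mult_transpose_self: "g \<in> SO3 \<Longrightarrow> g ** transpose g = mat 1"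
  using matrix_left_right_inverse SO3_transpose_mult_self by blast

lemma SO3_det: "g \<in> SO3 \<Longrightarrow> det g = 1"
  by (simp add: SO3_def)

lemma SO3_matrix_inv:
  assumes "g \<in> SO3"
  shows "matrix_inv g = transpose g"
proof -
  have "\<exists>g'. g ** g' = mat 1 \<and> g' ** g = mat 1"
    using assms SO3_transpose_mult_self SO3_mult_transpose_self by blast
  then have inv: "matrix_inv g ** g = mat 1"
    unfolding matrix_inv_def
    by (rule someI_ex[where P = "\<lambda>g'. g ** g' = mat 1 \<and> g' ** g = mat 1", THEN conjunct2])
  have "matrix_inv g = matrix_inv g ** (g ** transpose g)"
    using assms SO3_mult_transpose_self by simp
  also have "\<dots> = transpose g"
    by (simp add: matrix_mul_assoc inv)
  finally show ?thesis .
qed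

lemma SO3_mult: "g \<in> SO3 \<Longrightarrow> h \<in> SO3 \<Longrightarrow> g ** h \<in> SO3"
  by (simp add: SO3_def det_mul matrix_transpose_mul matrix_mul_assoc)
     (simp add: matrix_mul_assoc[symmetric])

lemma SO3_transpose: "g \<in> SO3 \<Longrightarrow> transpose g \<in> SO3"
  using SO3_mult_transpose_self[of g] by (simp add: SO3_def det_transpose)

lemma mat_1_SO3: "mat 1 \<in> SO3"
  by (simp add: SO3_def det_I)

lemma bil_matrix_vector: "bil (A *v x) y = bil x (transpose A *v y)"
proof -
  have "bil (A *v x) y = (\<Sum>a\<in>UNIV. \<Sum>j\<in>UNIV. A $ a $ j * x $ j * y $ a)"
    unfolding bil_def matrix_vector_mult_def by (simp add: sum_distrib_right)
  also have "\<dots> = (\<Sum>j\<in>UNIV. \<Sum>a\<in>UNIV. A $ a $ j * x $ j * y $ a)"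
    by (rule sum.swap)
  also have "\<dots> = bil x (transpose A *v y)"
    unfolding bil_def matrix_vector_mult_def transpose_def by (simp add: sum_distrib_left mult_ac)
  finally show ?thesis .
qed

lemma bil_SO3: "g \<in> SO3 \<Longrightarrow> bil (g *v x) (g *v y) = bil x y"
  by (simp add: bil_matrix_vector matrix_vector_mul_assoc SO3_transpose_mult_self
      del: transpose_matrix_vector)

lemma bil_expand: "bil x y = x$1 * y$1 + x$2 * y$2 + x$3 * y$3"
  by (simp add: bil_def sum_3)

lemma bil_commute: "bil x y = bil y x"
  by (simp add: bil_expand mult.commute)

lemma bil_scale_left: "bil (c *s x) y = c * bil x y"
  and bil_scale_right: "bil x (c *s y) = c * bil x y"
  by (simp_all add: bil_expand algebra_simps)

lemma bil_axis: "bil (axis i 1) x = x $ i"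
proof -
  have "bil (axis i 1) x = (\<Sum>a\<in>UNIV. if a = i then x $ a else 0)"
    unfolding bil_def axis_def by (intro sum.cong) auto
  then show ?thesis
    by simp
qed

lemma matrix_vector_axis_nth: "((M :: 'a::comm_ring_1^'n^'m) *v axis k 1) $ i = M $ i $ k"
proof -
  have "(M *v axis k 1) $ i = (\<Sum>j\<in>UNIV. if j = k then M $ i $ j else 0)"
    unfolding matrix_vector_mult_def axis_def vec_lambda_beta by (intro sum.cong) auto
  then show ?thesis
    by simp
qed

lemma vector_smult_eq_divide:
  fixes x y :: "'a::field^'n"
  shows "a \<noteq> 0 \<Longrightarrow> a *s x = b *s y \<Longrightarrow> x = (b / a) *s y"
  by (metis vector_smult_assoc vector_smult_lid divide_inverse_commute divide_inverse right_inverse)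

definition cross :: "complex^3 \<Rightarrow> complex^3 \<Rightarrow> complex^3" where
  "cross a b = vector [a$2 * b$3 - a$3 * b$2, a$3 * b$1 - a$1 * b$3, a$1 * b$2 - a$2 * b$1]"

lemma bil_cross_left: "bil (cross a b) a = 0"
  and bil_cross_right: "bil (cross a b) b = 0"
  by (simp_all add: bil_expand cross_def algebra_simps)

lemma bil_cross_cross: "bil (cross a b) (cross a b) = bil a a * bil b b - (bil a b)\<^sup>2"
  by (simp add: bil_expand cross_def power2_eq_square algebra_simps)

lemma cross_cross_left: "cross (cross a b) a = bil a a *s b - bil a b *s a"
  by (simp add: bil_expand cross_def vec_eq_iff forall_3 algebra_simps)

lemma det_rows_cross: "det (vector [a, b, c] :: complex^3^3) = bil a (cross b c)"
  by (simp add: det_3 bil_expand cross_def algebra_simps)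

lemma bil_normalize:
  assumes "bil x x \<noteq> 0"
  obtains s where "s \<noteq> 0" "bil ((1 / s) *s x) ((1 / s) *s x) = 1"
proof
  let ?s = "csqrt (bil x x)"
  have sq: "?s * ?s = bil x x"
    by (metis power2_csqrt power2_eq_square)
  then show "?s \<noteq> 0"
    using assms by auto
  then show "bil ((1 / ?s) *s x) ((1 / ?s) *s x) = 1"
    unfolding bil_scale_left bil_scale_right using sq by (simp add: field_simps)
qed

lemma orthonormal_rows_SO3:
  assumes "bil a a = 1" "bil b b = 1" "bil c c = 1" "bil a b = 0" "bil a c = 0" "bil b c = 0"
    and "det (vector [a, b, c] :: complex^3^3) = 1"
  shows "vector [a, b, c] \<in> SO3"
proof -
  let ?R = "vector [a, b, c] :: complex^3^3"
  have "?R ** transpose ?R = mat 1"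
    using assms by (simp add: vec_eq_iff forall_3 matrix_matrix_mult_def transpose_def sum_3
        mat_def bil_expand mult.commute)
  then show ?thesis
    using assms(7) matrix_left_right_inverse by (auto simp: SO3_def)
qed

lemma SO3_maps_e3_to_unit:
  assumes n: "bil n n = 1"
  shows "\<exists>g\<in>SO3. g *v axis 3 1 = n"
proof -
  have "\<exists>i. (n $ i)\<^sup>2 \<noteq> 1"
  proof (rule ccontr)
    assume "\<not> ?thesis"
    then have "bil n n = 3"
      by (simp add: bil_expand flip: power2_eq_square)
    then show False
      using n by simp
  qed
  \<comment> \<open>Over \<complex> a vector orthogonal to n may be isotropic; choosing e_i with
    bil e_i n \<noteq> \<plusminus>1 makes e_i \<times> n non-isotropic.\<close>
  then obtain i where i: "(bil (axis i 1) n)\<^sup>2 \<noteq> 1"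
    by (auto simp: bil_axis)
  let ?k = "cross (axis i 1) n"
  have "bil ?k ?k \<noteq> 0"
    using i n unfolding bil_cross_cross by (simp add: bil_axis)
  then obtain s where s: "bil ((1 / s) *s ?k) ((1 / s) *s ?k) = 1"
    by (rule bil_normalize)
  define m where "m = (1 / s) *s ?k"
  define l where "l = cross n m"
  have mm: "bil m m = 1"
    using s by (simp only: m_def)
  have mn: "bil m n = 0"
    by (simp only: m_def bil_scale_left bil_cross_right mult_zero_right)
  have nm: "bil n m = 0"
    using mn by (simp only: bil_commute)
  have ll: "bil l l = 1"
    unfolding l_def bil_cross_cross n mm nm by simp
  have lm: "bil l m = 0" and ln: "bil l n = 0"
    unfolding l_def by (simp_all only: bil_cross_left bil_cross_right)
  have "cross l n = m"
    unfolding l_def cross_cross_left n nm by simp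
  then have "det (vector [m, l, n] :: complex^3^3) = 1"
    using mm by (simp only: det_rows_cross)
  then have "vector [m, l, n] \<in> SO3"
    using mm ll n mn lm ln by (intro orthonormal_rows_SO3) (simp_all add: bil_commute)
  moreover have "transpose (vector [m, l, n] :: complex^3^3) *v axis 3 1 = n"
    by (simp add: vec_eq_iff forall_3 matrix_vector_mult_def sum_3 transpose_def axis_def)
  ultimately show ?thesis
    using SO3_transpose by blast
qed

lemma SO3_rotates_to_e3:
  assumes "bil v v \<noteq> 0"
  obtains g s where "g \<in> SO3" "s \<noteq> 0"
    and "transpose g *v v = s *s axis 3 1" "g *v axis 3 1 = (1 / s) *s v"
proof -
  obtain s where s: "s \<noteq> 0" "bil ((1 / s) *s v) ((1 / s) *s v) = 1"
    using assms by (rule bil_normalize)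
  then obtain g where g: "g \<in> SO3" "g *v axis 3 1 = (1 / s) *s v"
    using SO3_maps_e3_to_unit by blast
  have "transpose g *v v = s *s (transpose g *v (g *v axis 3 1))"
    using s(1) by (simp add: g(2) vector_scalar_commute vector_smult_assoc del: transpose_matrix_vector)
  also have "\<dots> = s *s axis 3 1"
    using g(1) by (simp add: matrix_vector_mul_assoc SO3_transpose_mult_self del: transpose_matrix_vector)
  finally show ?thesis
    using that g s(1) by blast
qed

section \<open>The action of G\<close>

lemma act_Pair: "act (g1, g2) (v, w, C) = (g1 *v v, g2 *v w, g2 ** C ** matrix_inv g1)"
  by (simp add: act_def)

lemma Gset_cases:
  assumes "g \<in> Gset"
  obtains g1 g2 where "g = (g1, g2)" "g1 \<in> SO3" "g2 \<in> SO3"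
  using assms by (auto simp: Gset_def)

lemma act_act:
  assumes "g1 \<in> SO3" "g2 \<in> SO3" "h1 \<in> SO3" "h2 \<in> SO3"
  shows "act (g1, g2) (act (h1, h2) x) = act (g1 ** h1, g2 ** h2) x"
  using assms by (cases x) (simp add: act_Pair SO3_matrix_inv SO3_mult matrix_transpose_mul
      matrix_mul_assoc matrix_vector_mul_assoc)

lemma act_transpose_act:
  assumes "g1 \<in> SO3" "g2 \<in> SO3"
  shows "act (transpose g1, transpose g2) (act (g1, g2) x) = x"
proof -
  have "act (transpose g1, transpose g2) (act (g1, g2) x) = act (mat 1, mat 1) x"
    using assms by (simp add: act_act SO3_transpose SO3_transpose_mult_self)
  also have "\<dots> = x"
    using SO3_matrix_inv[OF mat_1_SO3] by (cases x) (simp add: act_Pair)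
  finally show ?thesis .
qed

lemma act_act_Gset:
  assumes "g \<in> Gset" "h \<in> Gset"
  obtains k where "k \<in> Gset" "act g (act h x) = act k x"
proof -
  obtain g1 g2 h1 h2 where "g = (g1, g2)" "h = (h1, h2)"
    and "g1 \<in> SO3" "g2 \<in> SO3" "h1 \<in> SO3" "h2 \<in> SO3"
    using assms by (auto simp: Gset_def)
  then show ?thesis
    using that[of "(g1 ** h1, g2 ** h2)"] by (simp add: act_act Gset_def SO3_mult)
qed

lemma act_inverse_Gset:
  assumes "g \<in> Gset"
  obtains k where "k \<in> Gset" "act k (act g x) = x"
proof -
  obtain g1 g2 where "g = (g1, g2)" "g1 \<in> SO3" "g2 \<in> SO3"
    using assms by (rule Gset_cases)
  then show ?thesis
    using that[of "(transpose g1, transpose g2)"] by (simp add: act_transpose_act Gset_def SO3_transpose)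
qed

lemma pinv_act:
  assumes "g \<in> Gset"
  shows "pinv (act g x) = pinv x"
proof -
  obtain g1 g2 where g: "g = (g1, g2)" "g1 \<in> SO3" "g2 \<in> SO3"
    using assms by (rule Gset_cases)
  obtain v w C where x: "x = (v, w, C)"
    by (cases x)
  have Cv: "(g2 ** C ** transpose g1) *v (g1 *v v) = g2 *v (C *v v)"
    using g by (simp add: matrix_vector_mul_assoc matrix_mul_assoc[symmetric] SO3_transpose_mult_self
        del: transpose_matrix_vector)
  have CtC: "transpose (g2 ** C ** transpose g1) ** (g2 ** C ** transpose g1)
      = g1 ** (transpose C ** C) ** transpose g1"
    using g by (simp add: matrix_transpose_mul matrix_mul_assoc)
      (simp add: matrix_mul_assoc[symmetric] SO3_transpose_mult_self)
  have "mtrace (g1 ** (transpose C ** C) ** transpose g1) = mtrace (transpose C ** C)"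
    unfolding mtrace_def trace_def[symmetric]
    using g by (subst trace_mul_sym) (simp add: matrix_mul_assoc SO3_transpose_mult_self)
  then show ?thesis
    using g by (simp add: x act_Pair SO3_matrix_inv pinv_def p1_def p2_def p3_def p4_def p5_def
        bil_SO3 Cv CtC det_mul det_transpose SO3_det)
qed

lemma continuous_on_act: "continuous_on UNIV (act g)"
proof -
  obtain g1 g2 where g: "g = (g1, g2)"
    by (cases g)
  have "act g = (\<lambda>x. (g1 *v fst x, g2 *v fst (snd x), g2 ** snd (snd x) ** matrix_inv g1))"
    by (auto simp: g act_def)
  then show ?thesis
    unfolding matrix_matrix_mult_def matrix_vector_mult_def
    by (simp add: continuous_on_Pair continuous_on_vec_lambda continuous_on_sum continuous_on_mult
        continuous_on_component continuous_on_fst continuous_on_snd)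
qed

section \<open>Polynomial functions and the Zariski topology\<close>

lemma poly_fun_fst: "(\<lambda>x. fst x $ i) \<in> poly_fun"
proof -
  have "(\<lambda>x::pt. fst x $ i) = (\<lambda>(v, w, C). v $ i)"
    by auto
  then show ?thesis
    using poly_fun.coord_v by simp
qed

lemma poly_fun_fst_snd: "(\<lambda>x. fst (snd x) $ i) \<in> poly_fun"
proof -
  have "(\<lambda>x::pt. fst (snd x) $ i) = (\<lambda>(v, w, C). w $ i)"
    by auto
  then show ?thesis
    using poly_fun.coord_w by simp
qed

lemma poly_fun_snd_snd: "(\<lambda>x. snd (snd x) $ i $ j) \<in> poly_fun"
proof -
  have "(\<lambda>x::pt. snd (snd x) $ i $ j) = (\<lambda>(v, w, C). C $ i $ j)"
    by auto
  then show ?thesis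
    using poly_fun.coord_C by simp
qed

lemma poly_fun_sum:
  "finite A \<Longrightarrow> (\<And>a. a \<in> A \<Longrightarrow> f a \<in> poly_fun) \<Longrightarrow> (\<lambda>x. \<Sum>a\<in>A. f a x) \<in> poly_fun"
  by (induction A rule: finite_induct) (auto intro: poly_fun.intros)

lemma poly_fun_prod:
  "finite A \<Longrightarrow> (\<And>a. a \<in> A \<Longrightarrow> f a \<in> poly_fun) \<Longrightarrow> (\<lambda>x. \<Prod>a\<in>A. f a x) \<in> poly_fun"
  by (induction A rule: finite_induct) (auto intro: poly_fun.intros)

lemma poly_fun_diff: "f \<in> poly_fun \<Longrightarrow> g \<in> poly_fun \<Longrightarrow> (\<lambda>x. f x - g x) \<in> poly_fun"
  using poly_fun.add[OF _ poly_fun.mult[OF poly_fun.const, of g "-1"], of f] by simp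

lemma poly_fun_power: "f \<in> poly_fun \<Longrightarrow> (\<lambda>x. f x ^ n) \<in> poly_fun"
  by (induction n) (auto intro: poly_fun.intros)

lemma poly_fun_matrix_vector: "(\<lambda>x. (snd (snd x) *v fst x) $ i) \<in> poly_fun"
  and poly_fun_transpose_matrix_vector: "(\<lambda>x. (transpose (snd (snd x)) *v fst (snd x)) $ i) \<in> poly_fun"
  unfolding matrix_vector_mult_def transpose_def
  by (auto intro!: poly_fun_sum poly_fun.mult poly_fun_fst poly_fun_fst_snd poly_fun_snd_snd)

lemma continuous_on_poly_fun: "f \<in> poly_fun \<Longrightarrow> continuous_on UNIV f"
  by (induction f rule: poly_fun.induct)
    (simp_all add: case_prod_beta continuous_on_add continuous_on_mult continuous_on_component
      continuous_on_fst continuous_on_snd)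

lemma closed_zariski_closed: "zariski_closed S \<Longrightarrow> closed S"
  unfolding zariski_closed_def
  by (auto simp: Collect_ball_eq
      intro!: closed_INT closed_Collect_eq[OF continuous_on_poly_fun continuous_on_const])

lemma zariski_closed_zero_set: "f \<in> poly_fun \<Longrightarrow> zariski_closed {x. f x = 0}"
  unfolding zariski_closed_def by (intro exI[of _ "{f}"]) auto

lemma zariski_closed_Inter:
  assumes "\<And>S. S \<in> SS \<Longrightarrow> zariski_closed S"
  shows "zariski_closed (\<Inter>SS)"
proof -
  have "\<forall>S\<in>SS. \<exists>F. F \<subseteq> poly_fun \<and> S = {x. \<forall>f\<in>F. f x = 0}"
    using assms unfolding zariski_closed_def by blast
  then obtain F where F: "\<forall>S\<in>SS. F S \<subseteq> poly_fun \<and> S = {x. \<forall>f\<in>F S. f x = 0}"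
    by (rule bchoice[THEN exE])
  have "\<Inter>SS = {x. \<forall>f\<in>(\<Union>S\<in>SS. F S). f x = 0}"
  proof (intro set_eqI iffI)
    fix x assume "x \<in> \<Inter>SS"
    then show "x \<in> {x. \<forall>f\<in>(\<Union>S\<in>SS. F S). f x = 0}" using F by blast
  next
    fix x assume "x \<in> {x. \<forall>f\<in>(\<Union>S\<in>SS. F S). f x = 0}"
    then show "x \<in> \<Inter>SS" using F by blast
  qed
  moreover have "(\<Union>S\<in>SS. F S) \<subseteq> poly_fun"
    using F by blast
  ultimately show ?thesis
    unfolding zariski_closed_def by blast
qed

lemma zariski_closed_zariski_closure: "zariski_closed (zariski_closure A)"
  unfolding zariski_closure_def by (rule zariski_closed_Inter) blast

lemma zariski_closure_minimal: "zariski_closed S \<Longrightarrow> A \<subseteq> S \<Longrightarrow> zariski_closure A \<subseteq> S"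
  and zariski_closure_subset: "A \<subseteq> zariski_closure A"
  unfolding zariski_closure_def by blast+

lemma poly_fun_invariants: "p1 \<in> poly_fun" "p2 \<in> poly_fun" "p3 \<in> poly_fun" "p4 \<in> poly_fun" "p5 \<in> poly_fun"
proof -
  have "p1 = (\<lambda>x. \<Sum>a\<in>UNIV. fst x $ a * fst x $ a)"
    and "p2 = (\<lambda>x. \<Sum>a\<in>UNIV. fst (snd x) $ a * fst (snd x) $ a)"
    and "p3 = (\<lambda>x. \<Sum>a\<in>UNIV. (snd (snd x) *v fst x) $ a * fst (snd x) $ a)"
    and "p4 = (\<lambda>x. \<Sum>i\<in>UNIV. \<Sum>k\<in>UNIV. snd (snd x) $ k $ i * snd (snd x) $ k $ i)"
    and "p5 = (\<lambda>x. \<Sum>p\<in>{p. p permutes (UNIV :: 3 set)}.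
                    of_int (sign p) * (\<Prod>i\<in>UNIV. snd (snd x) $ i $ p i))"
    by (auto simp: p1_def p2_def p3_def p4_def p5_def bil_def mtrace_def det_def
        matrix_matrix_mult_def transpose_def)
  note eqs = this
  note poly_fun_intros = poly_fun_sum poly_fun_prod poly_fun.mult poly_fun.const poly_fun_fst
    poly_fun_fst_snd poly_fun_snd_snd poly_fun_matrix_vector
  show "p1 \<in> poly_fun" "p2 \<in> poly_fun" "p3 \<in> poly_fun" "p4 \<in> poly_fun" "p5 \<in> poly_fun"
    by (subst eqs; auto intro!: poly_fun_intros simp: finite_permutations)+
qed

section \<open>The slice X0\<close>

definition X0_point ::
    "complex \<Rightarrow> complex \<Rightarrow> complex \<Rightarrow> complex \<Rightarrow> complex \<Rightarrow> complex \<Rightarrow> complex \<Rightarrow> pt" where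
  "X0_point v w A B C D e =
     (vector [0, 0, v], vector [0, 0, w], vector [vector [A, B, 0], vector [C, D, 0], vector [0, 0, e]])"

lemma X0_point_in_X0: "X0_point v w A B C D e \<in> X0"
  by (simp add: X0_point_def X0_def forall_3)

lemma X0_cases:
  assumes "x \<in> X0"
  obtains v w A B C D e where "x = X0_point v w A B C D e"
proof -
  obtain v w C where x: "x = (v, w, C)"
    by (cases x)
  have "x = X0_point (v$3) (w$3) (C$1$1) (C$1$2) (C$2$1) (C$2$2) (C$3$3)"
    using assms unfolding x X0_def X0_point_def by (auto simp: vec_eq_iff forall_3)
  then show ?thesis
    by (rule that)
qed

lemma pinv_X0_point:
  "pinv (X0_point v w A B C D e) = [v\<^sup>2, w\<^sup>2, e * v * w, A\<^sup>2 + B\<^sup>2 + C\<^sup>2 + D\<^sup>2 + e\<^sup>2, (A * D - B * C) * e]"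
  by (simp add: X0_point_def pinv_def p1_def p2_def p3_def p4_def p5_def bil_def sum_3 mtrace_def
      matrix_matrix_mult_def transpose_def det_3 matrix_vector_mult_def power2_eq_square algebra_simps)

(* Coordinates on the 2 x 2 block [[A, B], [C, D]] that diagonalise the action of SO(2) x SO(2)
   by left and right multiplication (rot2_z below): R(a, b) = [[a, -b], [b, a]] has eigenvalues
   a + ib and a - ib. *)
definition z1 :: "complex \<Rightarrow> complex \<Rightarrow> complex \<Rightarrow> complex \<Rightarrow> complex" where
  "z1 A B C D = (A + D) + \<i> * (C - B)"
definition z2 :: "complex \<Rightarrow> complex \<Rightarrow> complex \<Rightarrow> complex \<Rightarrow> complex" where
  "z2 A B C D = (A + D) - \<i> * (C - B)"
definition z3 :: "complex \<Rightarrow> complex \<Rightarrow> complex \<Rightarrow> complex \<Rightarrow> complex" where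
  "z3 A B C D = (A - D) + \<i> * (B + C)"
definition z4 :: "complex \<Rightarrow> complex \<Rightarrow> complex \<Rightarrow> complex \<Rightarrow> complex" where
  "z4 A B C D = (A - D) - \<i> * (B + C)"

lemma z1_z2: "z1 A B C D * z2 A B C D = A\<^sup>2 + B\<^sup>2 + C\<^sup>2 + D\<^sup>2 + 2 * (A * D - B * C)"
  and z3_z4: "z3 A B C D * z4 A B C D = A\<^sup>2 + B\<^sup>2 + C\<^sup>2 + D\<^sup>2 - 2 * (A * D - B * C)"
  unfolding z1_def z2_def z3_def z4_def by (simp_all add: power2_eq_square algebra_simps)

(* On X0 this is v^9 w^9 e^3 z1 z2 z3 z4 (hgen_X0_point): its non-vanishing is exactly what
   the normal form and the separation argument on X0 need. *)
definition hgen :: "pt \<Rightarrow> complex" where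
  "hgen x = p1 x * p2 x * p3 x *
     ((p1 x * p2 x * p4 x - (p3 x)\<^sup>2)\<^sup>2 * (p3 x)\<^sup>2 - 4 * (p5 x)\<^sup>2 * (p1 x)^3 * (p2 x)^3)"

lemma poly_fun_hgen: "hgen \<in> poly_fun"
  unfolding hgen_def[abs_def]
  by (intro poly_fun.mult poly_fun_diff poly_fun_power poly_fun_invariants poly_fun.const)

lemma hgen_act: "g \<in> Gset \<Longrightarrow> hgen (act g x) = hgen x"
  using pinv_act[of g x] by (simp add: pinv_def hgen_def)

lemma hgen_X0_point:
  "hgen (X0_point v w A B C D e) =
     v^9 * w^9 * e^3 * (z1 A B C D * z2 A B C D) * (z3 A B C D * z4 A B C D)"
proof -
  have "hgen (X0_point v w A B C D e) =
      v\<^sup>2 * w\<^sup>2 * (e * v * w) * ((v\<^sup>2 * w\<^sup>2 * (A\<^sup>2 + B\<^sup>2 + C\<^sup>2 + D\<^sup>2 + e\<^sup>2) - (e * v * w)\<^sup>2)\<^sup>2 * (e * v * w)\<^sup>2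
        - 4 * ((A * D - B * C) * e)\<^sup>2 * (v\<^sup>2)^3 * (w\<^sup>2)^3)"
    using pinv_X0_point[of v w A B C D e] by (simp add: hgen_def pinv_def)
  also have "\<dots> = v^9 * w^9 * e^3 * (A\<^sup>2 + B\<^sup>2 + C\<^sup>2 + D\<^sup>2 + 2 * (A * D - B * C))
      * (A\<^sup>2 + B\<^sup>2 + C\<^sup>2 + D\<^sup>2 - 2 * (A * D - B * C))"
    by algebra
  finally show ?thesis
    by (simp add: z1_z2 z3_z4)
qed

lemma zariski_closed_X2: "zariski_closed X2"
  unfolding X2_def by (rule zariski_closed_zariski_closure)

lemma act_X0_in_X2: "g \<in> Gset \<Longrightarrow> y \<in> X0 \<Longrightarrow> act g y \<in> X2"
  unfolding X2_def by (rule subsetD[OF zariski_closure_subset]) blast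

lemma X2_subset:
  "zariski_closed S \<Longrightarrow> (\<And>g y. g \<in> Gset \<Longrightarrow> y \<in> X0 \<Longrightarrow> act g y \<in> S) \<Longrightarrow> X2 \<subseteq> S"
  unfolding X2_def by (rule zariski_closure_minimal) auto

section \<open>A normal form on X2\<close>

(* Where bil v v and bil w w do not vanish, these equations say C v \<in> span w and
   C\<^sup>T w \<in> span v; this is what allows the normal form. *)
definition Y2 :: "pt set" where
  "Y2 = {(v, w, C). bil w w *s (C *v v) = bil (C *v v) w *s w \<and>
                    bil v v *s (transpose C *v w) = bil (C *v v) w *s v}"

lemma zariski_closed_Y2: "zariski_closed Y2"
proof -
  define F1 where "F1 i x = p2 x * (snd (snd x) *v fst x) $ i - p3 x * fst (snd x) $ i" for i x
  define F2 where "F2 i x = p1 x * (transpose (snd (snd x)) *v fst (snd x)) $ i - p3 x * fst x $ i"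
    for i x
  have "range F1 \<union> range F2 \<subseteq> poly_fun"
    unfolding F1_def[abs_def] F2_def[abs_def]
    by (auto simp del: transpose_matrix_vector intro!: poly_fun_diff poly_fun.mult
        poly_fun_invariants poly_fun_fst poly_fun_fst_snd poly_fun_matrix_vector
        poly_fun_transpose_matrix_vector)
  moreover have "Y2 = {x. \<forall>i. F1 i x = 0 \<and> F2 i x = 0}"
    by (auto simp: Y2_def F1_def F2_def p1_def p2_def p3_def vec_eq_iff simp del: transpose_matrix_vector)
  then have "Y2 = {x. \<forall>f \<in> range F1 \<union> range F2. f x = 0}"
    by auto
  ultimately show ?thesis
    unfolding zariski_closed_def by blast
qed

lemma act_Y2:
  assumes "g \<in> Gset" "x \<in> Y2"
  shows "act g x \<in> Y2"
proof -
  obtain g1 g2 where g: "g = (g1, g2)" "g1 \<in> SO3" "g2 \<in> SO3"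
    using assms(1) by (rule Gset_cases)
  obtain v w C where x: "x = (v, w, C)"
    by (cases x)
  have Cv: "(g2 ** C ** transpose g1) *v (g1 *v v) = g2 *v (C *v v)"
    using g by (simp add: matrix_vector_mul_assoc matrix_mul_assoc[symmetric] SO3_transpose_mult_self
        del: transpose_matrix_vector)
  have Ctw: "transpose (g2 ** C ** transpose g1) *v (g2 *v w) = g1 *v (transpose C *v w)"
    using g by (simp add: matrix_transpose_mul matrix_vector_mul_assoc matrix_mul_assoc
        SO3_transpose_mult_self del: transpose_matrix_vector)
      (simp add: matrix_mul_assoc[symmetric] SO3_transpose_mult_self)
  have "bil w w *s (g2 *v (C *v v)) = bil (C *v v) w *s (g2 *v w)"
    and "bil v v *s (g1 *v (transpose C *v w)) = bil (C *v v) w *s (g1 *v v)"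
    using assms(2) by (simp_all add: x Y2_def flip: vector_scalar_commute del: transpose_matrix_vector)
  then show ?thesis
    using g by (simp add: x act_Pair SO3_matrix_inv Y2_def Cv Ctw bil_SO3 del: transpose_matrix_vector)
qed

lemma X0_subset_Y2: "X0 \<subseteq> Y2"
proof
  fix y assume "y \<in> X0"
  then obtain v w A B C D e where "y = X0_point v w A B C D e"
    by (rule X0_cases)
  then show "y \<in> Y2"
    by (simp add: X0_point_def Y2_def bil_def sum_3 transpose_def matrix_vector_mult_def vec_eq_iff
        forall_3 algebra_simps)
qed

lemma X2_subset_Y2: "X2 \<subseteq> Y2"
  using X2_subset zariski_closed_Y2 act_Y2 X0_subset_Y2 by blast

lemma X0_memberI:
  assumes "v = a *s axis 3 1" "w = b *s axis 3 1"
    and "M *v axis 3 1 = c *s axis 3 1" "transpose M *v axis 3 1 = d *s axis 3 1"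
  shows "(v, w, M) \<in> X0"
proof -
  have "M $ j $ i = 0" if "(i = 3) \<noteq> (j = 3)" for i j :: 3
  proof (cases "i = 3")
    case True
    then show ?thesis
      using that matrix_vector_axis_nth[of M 3 j] assms(3) by (simp add: axis_def)
  next
    case False
    then show ?thesis
      using that matrix_vector_axis_nth[of "transpose M" 3 i] assms(4) by (simp add: axis_def transpose_def)
  qed
  then show ?thesis
    using assms(1,2) by (simp add: X0_def axis_def)
qed

lemma Y2_normal_form:
  assumes "x \<in> Y2" "p1 x \<noteq> 0" "p2 x \<noteq> 0"
  shows "\<exists>g\<in>Gset. \<exists>y\<in>X0. x = act g y"
proof -
  obtain v w C where x: "x = (v, w, C)"
    by (cases x)
  have vv: "bil v v \<noteq> 0" and ww: "bil w w \<noteq> 0"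
    using assms(2,3) by (auto simp: x p1_def p2_def)
  obtain c1 c2 where Cv: "C *v v = c1 *s w" and Ctw: "transpose C *v w = c2 *s v"
    using assms(1) vector_smult_eq_divide[OF vv] vector_smult_eq_divide[OF ww]
    by (simp add: x Y2_def del: transpose_matrix_vector) blast
  obtain g1 s1 where g1: "g1 \<in> SO3" "s1 \<noteq> 0" "transpose g1 *v v = s1 *s axis 3 1"
    "g1 *v axis 3 1 = (1 / s1) *s v"
    using vv by (rule SO3_rotates_to_e3)
  obtain g2 s2 where g2: "g2 \<in> SO3" "s2 \<noteq> 0" "transpose g2 *v w = s2 *s axis 3 1"
    "g2 *v axis 3 1 = (1 / s2) *s w"
    using ww by (rule SO3_rotates_to_e3)
  define M where "M = transpose g2 ** C ** g1"
  have "M *v axis 3 1 = (c1 / s1) *s (transpose g2 *v w)"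
    by (simp add: M_def g1(4) Cv matrix_vector_mul_assoc[symmetric] vector_scalar_commute
        vector_smult_assoc del: transpose_matrix_vector)
  then have M: "M *v axis 3 1 = (c1 / s1 * s2) *s axis 3 1"
    by (simp add: g2(3) vector_smult_assoc del: transpose_matrix_vector)
  have "transpose M *v axis 3 1 = (c2 / s2) *s (transpose g1 *v v)"
    by (simp add: M_def matrix_transpose_mul g2(4) Ctw matrix_vector_mul_assoc[symmetric]
        vector_scalar_commute vector_smult_assoc del: transpose_matrix_vector)
  then have Mt: "transpose M *v axis 3 1 = (c2 / s2 * s1) *s axis 3 1"
    by (simp add: g1(3) vector_smult_assoc del: transpose_matrix_vector)
  have "act (transpose g1, transpose g2) x = (transpose g1 *v v, transpose g2 *v w, M)"
    using g1(1) by (simp add: x act_Pair M_def SO3_matrix_inv SO3_transpose)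
  then have "act (transpose g1, transpose g2) x \<in> X0"
    using g1(3) g2(3) M Mt by (simp add: X0_memberI)
  moreover have "x = act (g1, g2) (act (transpose g1, transpose g2) x)"
    using act_transpose_act[of "transpose g1" "transpose g2" x] g1(1) g2(1) by (simp add: SO3_transpose)
  moreover have "(g1, g2) \<in> Gset"
    using g1(1) g2(1) by (simp add: Gset_def)
  ultimately show ?thesis
    by blast
qed

section \<open>Separation of generic orbits\<close>

(* The entries of R(a2, b2) [[A, B], [C, D]] R(a1, b1)\<^sup>T with R(a, b) = [[a, -b], [b, a]]. *)
definition rot2 :: "complex \<Rightarrow> complex \<Rightarrow> complex \<Rightarrow> complex \<Rightarrow> complex \<Rightarrow> complex \<Rightarrow> complex \<Rightarrow> complex
    \<Rightarrow> complex \<times> complex \<times> complex \<times> complex" where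
  "rot2 a2 b2 a1 b1 A B C D =
     ((a2 * A - b2 * C) * a1 - (a2 * B - b2 * D) * b1, (a2 * A - b2 * C) * b1 + (a2 * B - b2 * D) * a1,
      (b2 * A + a2 * C) * a1 - (b2 * B + a2 * D) * b1, (b2 * A + a2 * C) * b1 + (b2 * B + a2 * D) * a1)"

lemma rot2_z:
  assumes "rot2 a2 b2 a1 b1 A B C D = (A', B', C', D')"
  shows "z1 A' B' C' D' = (a2 + \<i> * b2) * (a1 - \<i> * b1) * z1 A B C D"
    and "z2 A' B' C' D' = (a2 - \<i> * b2) * (a1 + \<i> * b1) * z2 A B C D"
    and "z3 A' B' C' D' = (a2 + \<i> * b2) * (a1 + \<i> * b1) * z3 A B C D"
    and "z4 A' B' C' D' = (a2 - \<i> * b2) * (a1 - \<i> * b1) * z4 A B C D"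
  using assms i_squared unfolding rot2_def z1_def z2_def z3_def z4_def
  by (auto; algebra)+

lemma z_inject:
  assumes "z1 A B C D = z1 A' B' C' D'" "z2 A B C D = z2 A' B' C' D'"
    and "z3 A B C D = z3 A' B' C' D'" "z4 A B C D = z4 A' B' C' D'"
  shows "(A, B, C, D) = (A', B', C', D')"
proof -
  have recover:
    "A = (z1 A B C D + z2 A B C D + z3 A B C D + z4 A B C D) / 4"
    "B = (z3 A B C D - z4 A B C D - z1 A B C D + z2 A B C D) / (4 * \<i>)"
    "C = (z3 A B C D - z4 A B C D + z1 A B C D - z2 A B C D) / (4 * \<i>)"
    "D = (z1 A B C D + z2 A B C D - z3 A B C D - z4 A B C D) / 4" for A B C D
    by (simp_all add: z1_def z2_def z3_def z4_def field_simps)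
  show ?thesis
    using recover[where A = A and B = B and C = C and D = D, unfolded assms]
      recover[where A = A' and B = B' and C = C' and D = D'] by (metis (no_types))
qed

lemma sum_squares_factor: "a\<^sup>2 + b\<^sup>2 = (a + \<i> * b) * (a - \<i> * b)"
  using i_squared by algebra

lemma unit_circle_point:
  assumes "l \<noteq> 0"
  obtains a b :: complex where "a\<^sup>2 + b\<^sup>2 = 1" "a + \<i> * b = l" "a - \<i> * b = 1 / l"
proof
  let ?a = "(l + 1 / l) / 2" and ?b = "(l - 1 / l) / (2 * \<i>)"
  show "?a + \<i> * ?b = l" "?a - \<i> * ?b = 1 / l"
    by (simp_all add: field_simps)
  then show "?a\<^sup>2 + ?b\<^sup>2 = 1"
    using assms by (simp add: sum_squares_factor)
qed

lemma rot2_scaling: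
  assumes "l1 \<noteq> 0" "l2 \<noteq> 0"
  obtains a1 b1 a2 b2 where "a1\<^sup>2 + b1\<^sup>2 = 1" "a2\<^sup>2 + b2\<^sup>2 = 1"
    and "\<And>A B C D A' B' C' D'. rot2 a2 b2 a1 b1 A B C D = (A', B', C', D') \<Longrightarrow>
      z1 A' B' C' D' = l2 / l1 * z1 A B C D \<and> z2 A' B' C' D' = l1 / l2 * z2 A B C D \<and>
      z3 A' B' C' D' = l1 * l2 * z3 A B C D \<and> z4 A' B' C' D' = z4 A B C D / (l1 * l2)"
proof -
  obtain a1 b1 where ab1: "a1\<^sup>2 + b1\<^sup>2 = 1" "a1 + \<i> * b1 = l1" "a1 - \<i> * b1 = 1 / l1"
    using assms(1) by (rule unit_circle_point)
  obtain a2 b2 where ab2: "a2\<^sup>2 + b2\<^sup>2 = 1" "a2 + \<i> * b2 = l2" "a2 - \<i> * b2 = 1 / l2"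
    using assms(2) by (rule unit_circle_point)
  show ?thesis
  proof (rule that[OF ab1(1) ab2(1)])
    fix A B C D A' B' C' D'
    assume "rot2 a2 b2 a1 b1 A B C D = (A', B', C', D')"
    from rot2_z[OF this, unfolded ab1(2,3) ab2(2,3)] show "z1 A' B' C' D' = l2 / l1 * z1 A B C D \<and>
      z2 A' B' C' D' = l1 / l2 * z2 A B C D \<and> z3 A' B' C' D' = l1 * l2 * z3 A B C D \<and>
      z4 A' B' C' D' = z4 A B C D / (l1 * l2)"
      by simp
  qed
qed

lemma rot2_connects:
  assumes u: "z1 A' B' C' D' \<noteq> 0" "z2 A' B' C' D' \<noteq> 0" "z3 A' B' C' D' \<noteq> 0" "z4 A' B' C' D' \<noteq> 0"
    and z12: "z1 A B C D * z2 A B C D = z1 A' B' C' D' * z2 A' B' C' D'"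
    and z34: "z3 A B C D * z4 A B C D = z3 A' B' C' D' * z4 A' B' C' D'"
  shows "\<exists>a1 b1 a2 b2. a1\<^sup>2 + b1\<^sup>2 = 1 \<and> a2\<^sup>2 + b2\<^sup>2 = 1 \<and> rot2 a2 b2 a1 b1 A B C D = (A', B', C', D')"
proof -
  have w: "z1 A B C D \<noteq> 0" "z2 A B C D \<noteq> 0" "z3 A B C D \<noteq> 0" "z4 A B C D \<noteq> 0"
    using u z12 z34 by auto
  define \<mu> where "\<mu> = z1 A' B' C' D' / z1 A B C D"
  define \<nu> where "\<nu> = z3 A' B' C' D' / z3 A B C D"
  have \<mu>\<nu>: "\<mu> \<noteq> 0" "\<nu> \<noteq> 0"
    using u w by (simp_all add: \<mu>_def \<nu>_def)
  \<comment> \<open>Scale z1 by \<mu> and z3 by \<nu>; the product relations then force the right scaling of z2, z4.\<close>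
  define l2 where "l2 = csqrt (\<mu> * \<nu>)"
  have l2: "l2 * l2 = \<mu> * \<nu>"
    unfolding l2_def by (metis power2_csqrt power2_eq_square)
  then have "l2 \<noteq> 0"
    using \<mu>\<nu> by auto
  define l1 where "l1 = l2 / \<mu>"
  have "l1 \<noteq> 0"
    using \<open>l2 \<noteq> 0\<close> \<mu>\<nu> by (simp add: l1_def)
  then obtain a1 b1 a2 b2 where ab: "a1\<^sup>2 + b1\<^sup>2 = 1" "a2\<^sup>2 + b2\<^sup>2 = 1"
    and scale: "\<And>E F G H. rot2 a2 b2 a1 b1 A B C D = (E, F, G, H) \<Longrightarrow>
      z1 E F G H = l2 / l1 * z1 A B C D \<and> z2 E F G H = l1 / l2 * z2 A B C D \<and>
      z3 E F G H = l1 * l2 * z3 A B C D \<and> z4 E F G H = z4 A B C D / (l1 * l2)"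
    using \<open>l2 \<noteq> 0\<close> by (rule rot2_scaling) blast
  obtain E F G H where r: "rot2 a2 b2 a1 b1 A B C D = (E, F, G, H)"
    by (metis prod_cases4)
  have "z1 E F G H = z1 A' B' C' D'"
    using scale[OF r] \<open>l2 \<noteq> 0\<close> w by (simp add: l1_def \<mu>_def field_simps)
  moreover have "z2 E F G H = z2 A' B' C' D'"
    using scale[OF r] \<open>l2 \<noteq> 0\<close> u w z12 by (simp add: l1_def \<mu>_def field_simps)
  moreover have "z3 E F G H = z3 A' B' C' D'"
    using scale[OF r] \<open>l2 \<noteq> 0\<close> \<mu>\<nu> w l2 by (simp add: l1_def \<nu>_def field_simps)
  moreover have "z4 E F G H = z4 A' B' C' D'"
  proof -
    have "z4 E F G H = z4 A B C D * \<mu> / (l2 * l2)"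
      using scale[OF r] \<open>l2 \<noteq> 0\<close> \<mu>\<nu> by (simp add: l1_def field_simps)
    also have "\<dots> = z4 A B C D / \<nu>"
      using l2 \<mu>\<nu> by (simp add: field_simps)
    also have "\<dots> = z4 A' B' C' D'"
      using z34 u w by (simp add: \<nu>_def field_simps)
    finally show ?thesis .
  qed
  ultimately have "(E, F, G, H) = (A', B', C', D')"
    by (rule z_inject)
  then show ?thesis
    using ab r by blast
qed

(* A rotation of the (e1, e2)-plane composed with diag(1, s, s); the sign s = \<plusminus>1 accounts
   for v, w and e being determined by the invariants only up to sign. *)
definition blk :: "complex \<Rightarrow> complex \<Rightarrow> complex \<Rightarrow> complex^3^3" where
  "blk a b s = vector [vector [a, - s * b, 0], vector [b, s * a, 0], vector [0, 0, s]]"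

lemma blk_SO3:
  assumes "a\<^sup>2 + b\<^sup>2 = 1" "s\<^sup>2 = 1"
  shows "blk a b s \<in> SO3"
proof -
  have "transpose (blk a b s) ** blk a b s = mat 1"
    using assms by (simp add: blk_def vec_eq_iff forall_3 matrix_matrix_mult_def transpose_def sum_3
        mat_def power2_eq_square algebra_simps)
  moreover have "det (blk a b s) = 1"
    using assms by (simp add: blk_def det_3 power2_eq_square algebra_simps)
  ultimately show ?thesis
    by (simp add: SO3_def)
qed

lemma act_blk_X0_point:
  assumes "blk a1 b1 s1 \<in> SO3"
    and "rot2 a2 b2 a1 b1 A (s1 * B) (s2 * C) (s1 * s2 * D) = (A', B', C', D')"
  shows "act (blk a1 b1 s1, blk a2 b2 s2) (X0_point v w A B C D e)
    = X0_point (s1 * v) (s2 * w) A' B' C' D' (s1 * s2 * e)"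
  using assms(2) unfolding X0_point_def act_Pair SO3_matrix_inv[OF assms(1)]
  by (simp add: blk_def rot2_def vec_eq_iff forall_3 matrix_matrix_mult_def matrix_vector_mult_def
      transpose_def sum_3 algebra_simps)

lemma X0_point_pinv_eq:
  assumes nz: "v \<noteq> 0" "w \<noteq> 0" "e \<noteq> 0"
    and eq: "pinv (X0_point v w A B C D e) = pinv (X0_point v' w' A' B' C' D' e')"
  obtains s1 s2 where "s1\<^sup>2 = 1" "s2\<^sup>2 = 1" "v' = s1 * v" "w' = s2 * w" "e' = s1 * s2 * e"
    and "A\<^sup>2 + (s1 * B)\<^sup>2 + (s2 * C)\<^sup>2 + (s1 * s2 * D)\<^sup>2 = A'\<^sup>2 + B'\<^sup>2 + C'\<^sup>2 + D'\<^sup>2"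
    and "A * (s1 * s2 * D) - (s1 * B) * (s2 * C) = A' * D' - B' * C'"
proof -
  have q: "v\<^sup>2 = v'\<^sup>2" "w\<^sup>2 = w'\<^sup>2" "e * v * w = e' * v' * w'"
    "A\<^sup>2 + B\<^sup>2 + C\<^sup>2 + D\<^sup>2 + e\<^sup>2 = A'\<^sup>2 + B'\<^sup>2 + C'\<^sup>2 + D'\<^sup>2 + e'\<^sup>2"
    "(A * D - B * C) * e = (A' * D' - B' * C') * e'"
    using eq by (simp_all add: pinv_X0_point)
  define s1 where "s1 = v' / v"
  define s2 where "s2 = w' / w"
  have v': "v' = s1 * v" and w': "w' = s2 * w"
    using nz by (simp_all add: s1_def s2_def)
  have s: "s1 * s1 = 1" "s2 * s2 = 1"
    using q(1,2) nz by (simp_all add: v' w' power2_eq_square)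
  have e': "e' = s1 * s2 * e"
  proof -
    have "e' * (s1 * s2) = e"
      using q(3) nz by (simp add: v' w' algebra_simps)
    then have "e' * (s1 * s1) * (s2 * s2) = s1 * s2 * e"
      by (simp add: algebra_simps flip: \<open>e' * (s1 * s2) = e\<close>)
    then show ?thesis
      using s by simp
  qed
  have tr: "A\<^sup>2 + (s1 * B)\<^sup>2 + (s2 * C)\<^sup>2 + (s1 * s2 * D)\<^sup>2 = A'\<^sup>2 + B'\<^sup>2 + C'\<^sup>2 + D'\<^sup>2"
    using q(4) s by (simp add: e' power2_eq_square algebra_simps)
  have "(A * D - B * C) * e = ((A' * D' - B' * C') * (s1 * s2)) * e"
    using q(5) by (simp add: e' ac_simps)
  then have d: "A * D - B * C = (A' * D' - B' * C') * (s1 * s2)"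
    using nz(3) by simp
  have "A * (s1 * s2 * D) - (s1 * B) * (s2 * C) = (s1 * s2) * (A * D - B * C)"
    by (simp add: algebra_simps)
  also have "\<dots> = (A' * D' - B' * C') * ((s1 * s1) * (s2 * s2))"
    unfolding d by (simp add: algebra_simps)
  finally have "A * (s1 * s2 * D) - (s1 * B) * (s2 * C) = A' * D' - B' * C'"
    using s by simp
  moreover have "s1\<^sup>2 = 1" "s2\<^sup>2 = 1"
    using s by (simp_all add: power2_eq_square)
  ultimately show ?thesis
    using that v' w' e' tr by blast
qed

lemma X0_point_orbits_separated:
  assumes nz: "v \<noteq> 0" "w \<noteq> 0" "e \<noteq> 0"
    "z1 A' B' C' D' \<noteq> 0" "z2 A' B' C' D' \<noteq> 0" "z3 A' B' C' D' \<noteq> 0" "z4 A' B' C' D' \<noteq> 0"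
    and eq: "pinv (X0_point v w A B C D e) = pinv (X0_point v' w' A' B' C' D' e')"
  shows "\<exists>g\<in>Gset. X0_point v' w' A' B' C' D' e' = act g (X0_point v w A B C D e)"
proof -
  obtain s1 s2 where s: "s1\<^sup>2 = 1" "s2\<^sup>2 = 1"
    and v': "v' = s1 * v" and w': "w' = s2 * w" and e': "e' = s1 * s2 * e"
    and tr: "A\<^sup>2 + (s1 * B)\<^sup>2 + (s2 * C)\<^sup>2 + (s1 * s2 * D)\<^sup>2 = A'\<^sup>2 + B'\<^sup>2 + C'\<^sup>2 + D'\<^sup>2"
    and det: "A * (s1 * s2 * D) - (s1 * B) * (s2 * C) = A' * D' - B' * C'"
    using nz(1-3) eq by (rule X0_point_pinv_eq)
  \<comment> \<open>After absorbing the signs, the block has the same z-products as the target block.\<close>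
  obtain a1 b1 a2 b2 where ab: "a1\<^sup>2 + b1\<^sup>2 = 1" "a2\<^sup>2 + b2\<^sup>2 = 1"
    "rot2 a2 b2 a1 b1 A (s1 * B) (s2 * C) (s1 * s2 * D) = (A', B', C', D')"
    using rot2_connects[where A = A and B = "s1 * B" and C = "s2 * C" and D = "s1 * s2 * D", OF nz(4-7)]
    unfolding z1_z2 z3_z4 tr det by blast
  have g: "(blk a1 b1 s1, blk a2 b2 s2) \<in> Gset"
    using ab s by (simp add: Gset_def blk_SO3)
  then have "act (blk a1 b1 s1, blk a2 b2 s2) (X0_point v w A B C D e) = X0_point v' w' A' B' C' D' e'"
    using act_blk_X0_point ab(3) by (simp add: Gset_def v' w' e' mult.commute)
  then show ?thesis
    using g by metis
qed

lemma generic_orbits_separated: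
  assumes x1: "x1 \<in> X2" "hgen x1 \<noteq> 0" and x2: "x2 \<in> X2" "hgen x2 \<noteq> 0"
    and eq: "pinv x1 = pinv x2"
  shows "\<exists>g\<in>Gset. x2 = act g x1"
proof -
  have "x1 \<in> Y2" "p1 x1 \<noteq> 0" "p2 x1 \<noteq> 0"
    using x1 X2_subset_Y2 by (auto simp: hgen_def)
  then obtain g y where g: "g \<in> Gset" and y0: "y \<in> X0" and x1_eq: "x1 = act g y"
    by (meson Y2_normal_form)
  have "x2 \<in> Y2" "p1 x2 \<noteq> 0" "p2 x2 \<noteq> 0"
    using x2 X2_subset_Y2 by (auto simp: hgen_def)
  then obtain h y' where h: "h \<in> Gset" and y'0: "y' \<in> X0" and x2_eq: "x2 = act h y'"
    by (meson Y2_normal_form)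
  obtain v w A B C D e where y: "y = X0_point v w A B C D e"
    using y0 by (rule X0_cases)
  obtain v' w' A' B' C' D' e' where y': "y' = X0_point v' w' A' B' C' D' e'"
    using y'0 by (rule X0_cases)
  have "v \<noteq> 0" "w \<noteq> 0" "e \<noteq> 0"
    using x1(2) by (simp_all add: x1_eq hgen_act[OF g] y hgen_X0_point)
  moreover have "z1 A' B' C' D' \<noteq> 0" "z2 A' B' C' D' \<noteq> 0" "z3 A' B' C' D' \<noteq> 0" "z4 A' B' C' D' \<noteq> 0"
    using x2(2) by (simp_all add: x2_eq hgen_act[OF h] y' hgen_X0_point)
  moreover have "pinv (X0_point v w A B C D e) = pinv (X0_point v' w' A' B' C' D' e')"
    using eq by (simp add: x1_eq x2_eq pinv_act g h flip: y y')
  ultimately obtain k where k: "k \<in> Gset" and y'_eq: "y' = act k y"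
    unfolding y y' by (meson X0_point_orbits_separated)
  obtain g' where g': "g' \<in> Gset" "act g' x1 = y"
    using g by (rule act_inverse_Gset) (simp add: x1_eq)
  obtain kg where kg: "kg \<in> Gset" "act k (act g' x1) = act kg x1"
    using k g'(1) by (rule act_act_Gset)
  obtain hkg where hkg: "hkg \<in> Gset" "act h (act kg x1) = act hkg x1"
    using h kg(1) by (rule act_act_Gset)
  have "x2 = act h (act k (act g' x1))"
    by (simp add: x2_eq y'_eq g'(2))
  also have "\<dots> = act hkg x1"
    by (simp add: kg(2) hkg(2))
  finally show ?thesis
    using hkg(1) by blast
qed

section \<open>Density of the generic part\<close>

lemma tendsto_vector3:
  assumes "(f1 \<longlongrightarrow> a1) F" "(f2 \<longlongrightarrow> a2) F" "(f3 \<longlongrightarrow> a3) F"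
  shows "((\<lambda>t. vector [f1 t, f2 t, f3 t] :: 'a::real_normed_vector^3) \<longlongrightarrow> vector [a1, a2, a3]) F"
proof (rule vec_tendstoI)
  fix i :: 3
  show "((\<lambda>t. vector [f1 t, f2 t, f3 t] $ i) \<longlongrightarrow> (vector [a1, a2, a3] :: 'a^3) $ i) F"
    using exhaust_3[of i] assms by auto
qed

lemma X0_subset_closure_generic: "X0 \<subseteq> closure {y \<in> X0. hgen y \<noteq> 0}"
proof
  fix y assume "y \<in> X0"
  then obtain v w A B C D e where y: "y = X0_point v w A B C D e"
    by (rule X0_cases)
  \<comment> \<open>Perturbing A by t shifts every z-coordinate by t, so for small t \<noteq> 0 no factor of
    hgen vanishes.\<close>
  define Y where "Y t = X0_point (v + t) (w + t) (A + t) B C D (e + t)" for t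
  have shift: "z1 (A + t) B C D = z1 A B C D + t" "z2 (A + t) B C D = z2 A B C D + t"
    "z3 (A + t) B C D = z3 A B C D + t" "z4 (A + t) B C D = z4 A B C D + t" for t
    by (simp_all add: z1_def z2_def z3_def z4_def algebra_simps)
  have shift_tendsto: "((\<lambda>t. a + t) \<longlongrightarrow> a) (at (0::complex))" for a :: complex
    using tendsto_add[OF tendsto_const[of a] tendsto_ident_at[of 0 UNIV]] by simp
  have "(Y \<longlongrightarrow> y) (at 0)"
    unfolding Y_def y X0_point_def by (intro tendsto_Pair tendsto_vector3 shift_tendsto tendsto_const)
  moreover have "\<forall>\<^sub>F t in at 0. t \<noteq> -v \<and> t \<noteq> -w \<and> t \<noteq> -e \<and> t \<noteq> - z1 A B C D \<and>
      t \<noteq> - z2 A B C D \<and> t \<noteq> - z3 A B C D \<and> t \<noteq> - z4 A B C D"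
    by (intro eventually_conj eventually_neq_at_within)
  then have "\<forall>\<^sub>F t in at 0. Y t \<in> closure {y \<in> X0. hgen y \<noteq> 0}"
    by (rule eventually_mono)
      (auto simp: Y_def hgen_X0_point shift add_eq_0_iff X0_point_in_X0 intro: closure_subset[THEN subsetD])
  ultimately show "y \<in> closure {y \<in> X0. hgen y \<noteq> 0}"
    by (intro Lim_in_closed_set[OF closed_closure]) auto
qed

lemma zariski_closure_X2_generic: "zariski_closure (X2 - {x. hgen x = 0}) = X2"
proof
  show "zariski_closure (X2 - {x. hgen x = 0}) \<subseteq> X2"
    by (rule zariski_closure_minimal[OF zariski_closed_X2]) blast
  let ?S = "zariski_closure (X2 - {x. hgen x = 0})"
  have "act g y \<in> ?S" if g: "g \<in> Gset" and y: "y \<in> X0" for g y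
  proof -
    have "act g ` {y \<in> X0. hgen y \<noteq> 0} \<subseteq> X2 - {x. hgen x = 0}"
      using act_X0_in_X2[OF g] hgen_act[OF g] by auto
    then have "act g ` {y \<in> X0. hgen y \<noteq> 0} \<subseteq> ?S"
      using zariski_closure_subset by (rule subset_trans)
    then have "act g ` closure {y \<in> X0. hgen y \<noteq> 0} \<subseteq> ?S"
      by (intro image_closure_subset continuous_on_subset[OF continuous_on_act]
          closed_zariski_closed zariski_closed_zariski_closure) auto
    then show ?thesis
      using y X0_subset_closure_generic by blast
  qed
  then show "X2 \<subseteq> ?S"
    by (intro X2_subset zariski_closed_zariski_closure)
qed

theorem propositionB6:
  shows "(\<forall>g\<in>Gset. \<forall>x\<in>X2. pinv (act g x) = pinv x) \<and>
    (\<exists>U Z. zariski_closed Z \<and> U = X2 - Z \<and> zariski_closure U = X2 \<and>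
      (\<forall>x1\<in>U. \<forall>x2\<in>U. pinv x1 = pinv x2 \<longrightarrow> (\<exists>g\<in>Gset. x2 = act g x1)))"
proof (intro conjI exI)
  show "\<forall>g\<in>Gset. \<forall>x\<in>X2. pinv (act g x) = pinv x"
    using pinv_act by blast
  show "zariski_closed {x. hgen x = 0}"
    by (rule zariski_closed_zero_set[OF poly_fun_hgen])
  show "zariski_closure (X2 - {x. hgen x = 0}) = X2"
    by (rule zariski_closure_X2_generic)
  show "\<forall>x1\<in>X2 - {x. hgen x = 0}. \<forall>x2\<in>X2 - {x. hgen x = 0}.
      pinv x1 = pinv x2 \<longrightarrow> (\<exists>g\<in>Gset. x2 = act g x1)"
    using generic_orbits_separated by blast
qed (rule refl)

end
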